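(* Let $G$ be a cubic graph and $F$ the edge set of a spanning tree of $G$. Then every twisted graph $T=(\vec G,G,<,A)$, with $<$ a total order on the edge set, has a positive sequence on $F$.
   Context: Signed sets on a finite set $E$: pairs $X=(X^+,X^-)$ of disjoint subsets, $X(e)=+1,-1,0$ according as $e\in X^+$, $e\in X^-$, or neither; support $\underline X=X^+\cup X^-$. Conformal: no $e$ with $X(e)=-Y(e)\ne0$; composition $(X\circ Y)(e)=X(e)$ if $X(e)\ne0$, else $Y(e)$. For a total order $<$ on $E$, $\mathcal C(<)=\{(\{e_1,e_3\},\{e_2\}),(\{e_2\},\{e_1,e_3\}):e_1<e_2<e_3\}$ (circuits of the rank 2 oriented matroid $\mathcal M(<)$; vectors are compositions of pairwise conformal families of circuits); for a partial order $\prec$, $\mathcal C(\prec)=\bigcap_{<\supseteq\prec}\mathcal C(<)$. For a directed graph $\vec G=(V,\vec E)$ (no loops, parallel or antiparallel edges), underlying simple graph $G=(V,E)$, a strong map $\mathcal M^*(\vec G)\to\mathcal M(<)$ means every signed minimal cut $(\{(u,w):u\in S,w\notin S\},\{(u,w):w\in S,u\notin S\})$ ($S$, $V\setminus S$ inducing connected subgraphs) is a vector of $\mathcal M(<)$; $C^*_v=(\{(u,v)\in\vec E\},\{(v,u)\in\vec E\})$. A twisted graph $T=(\vec G,G,\prec,A)$: $\prec$ a partial order on $E$, $G$ three-edge-connected, $A\subset\mathcal C(\prec)$, a strong map $\mathcal M^*(\vec G)\to\mathcal M(<)$ for every total $<\supseteq\prec$, and a partition $A=\bigsqcup_v A_v$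 with members of $A_v$ pairwise conformal and composing to $C^*_v$. A positive sequence for $T$ on $F$ is an enumeration $A=\{a_1,\dots,a_m\}$ ($m=|A|$) and an enumeration $F=\{f_2,\dots,f_m\}\subset E$ of distinct edges such that for each $2\le j\le m$: $a_j(f_j)\ne0$; $a_i(f_j)=0$ for all $i>j$; and $a_i(f_j)\in\{0,-a_j(f_j)\}$ for all $i<j$. *)

theory Defs
  imports Main
begin

text \<open>A signed set on ground type 'e is a pair (X+, X-) of (disjoint) sets.\<close>
type_synonym 'e sset = "'e set \<times> 'e set"

definition ssign :: "'e sset \<Rightarrow> 'e \<Rightarrow> int" where
  "ssign X e = (if e \<in> fst X then 1 else if e \<in> snd X then -1 else 0)"

definition conformal :: "'e sset \<Rightarrow> 'e sset \<Rightarrow> bool" where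
  "conformal X Y \<longleftrightarrow> (\<forall>e. \<not> (ssign X e = - ssign Y e \<and> ssign X e \<noteq> 0))"

text \<open>Composition: (X o Y)(e) = X(e) if X(e) /= 0, else Y(e).\<close>
definition scomp :: "'e sset \<Rightarrow> 'e sset \<Rightarrow> 'e sset" where
  "scomp X Y = (fst X \<union> (fst Y - snd X), snd X \<union> (snd Y - fst X))"

definition scomp_list :: "'e sset list \<Rightarrow> 'e sset" where
  "scomp_list xs = foldr scomp xs ({}, {})"

definition composes_to :: "'e sset set \<Rightarrow> 'e sset \<Rightarrow> bool" where
  "composes_to S X \<longleftrightarrow> finite S \<and> (\<forall>Y\<in>S. \<forall>Z\<in>S. conformal Y Z)
      \<and> (\<exists>xs. set xs = S \<and> scomp_list xs = X)"

definition strict_partial_order_on :: "'e set \<Rightarrow> ('e \<times> 'e) set \<Rightarrow> bool" where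
  "strict_partial_order_on E r \<longleftrightarrow> r \<subseteq> E \<times> E \<and> irrefl r \<and> trans r"

definition strict_total_order_on :: "'e set \<Rightarrow> ('e \<times> 'e) set \<Rightarrow> bool" where
  "strict_total_order_on E r \<longleftrightarrow> strict_partial_order_on E r
      \<and> (\<forall>x\<in>E. \<forall>y\<in>E. x \<noteq> y \<longrightarrow> (x, y) \<in> r \<or> (y, x) \<in> r)"

definition circuits_tot :: "('e \<times> 'e) set \<Rightarrow> 'e sset set" where
  "circuits_tot lt =
     {({e1, e3}, {e2}) | e1 e2 e3. (e1, e2) \<in> lt \<and> (e2, e3) \<in> lt}
   \<union> {({e2}, {e1, e3}) | e1 e2 e3. (e1, e2) \<in> lt \<and> (e2, e3) \<in> lt}"

definition circuits_po :: "'e set \<Rightarrow> ('e \<times> 'e) set \<Rightarrow> 'e sset set" where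
  "circuits_po E pr = (\<Inter> {circuits_tot lt | lt. strict_total_order_on E lt \<and> pr \<subseteq> lt})"

definition is_vector_tot :: "('e \<times> 'e) set \<Rightarrow> 'e sset \<Rightarrow> bool" where
  "is_vector_tot lt X \<longleftrightarrow> (\<exists>S. S \<subseteq> circuits_tot lt \<and> composes_to S X)"

text \<open>A directed graph (V, Ed): finite, no loops, no parallel or antiparallel edges
  (parallel edges are excluded automatically since Ed is a set of pairs).
  The underlying simple graph G has an edge {u,w} for each (u,w) in Ed; we identify
  the edge set E of G with Ed.\<close>
definition digraph_wf :: "'v set \<Rightarrow> ('v \<times> 'v) set \<Rightarrow> bool" where
  "digraph_wf V Ed \<longleftrightarrow> finite V \<and> Ed \<subseteq> V \<times> V
     \<and> (\<forall>(u, w)\<in>Ed. u \<noteq> w \<and> (w, u) \<notin> Ed)"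

definition adj :: "('v \<times> 'v) set \<Rightarrow> ('v \<times> 'v) set" where
  "adj D = {(u, w). (u, w) \<in> D \<or> (w, u) \<in> D}"

definition connected_on :: "('v \<times> 'v) set \<Rightarrow> 'v set \<Rightarrow> bool" where
  "connected_on D W \<longleftrightarrow> W \<noteq> {} \<and> (\<forall>x\<in>W. \<forall>y\<in>W. (x, y) \<in> (adj D \<inter> W \<times> W)\<^sup>*)"

definition three_edge_connected :: "'v set \<Rightarrow> ('v \<times> 'v) set \<Rightarrow> bool" where
  "three_edge_connected V Ed \<longleftrightarrow>
     (\<forall>D. D \<subseteq> Ed \<and> card D \<le> 2 \<longrightarrow> connected_on (Ed - D) V)"

definition cubic :: "'v set \<Rightarrow> ('v \<times> 'v) set \<Rightarrow> bool" where
  "cubic V Ed \<longleftrightarrow> (\<forall>v\<in>V. card {e\<in>Ed. fst e = v \<or> snd e = v} = 3)"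

definition has_cycle :: "('v \<times> 'v) set \<Rightarrow> bool" where
  "has_cycle D \<longleftrightarrow> (\<exists>vs. length vs \<ge> 3 \<and> distinct vs
      \<and> (\<forall>i < length vs. (vs ! i, vs ! ((i + 1) mod length vs)) \<in> adj D))"

definition spanning_tree :: "'v set \<Rightarrow> ('v \<times> 'v) set \<Rightarrow> ('v \<times> 'v) set \<Rightarrow> bool" where
  "spanning_tree V Ed F \<longleftrightarrow> F \<subseteq> Ed \<and> connected_on F V \<and> \<not> has_cycle F"

definition signed_cut :: "('v \<times> 'v) set \<Rightarrow> 'v set \<Rightarrow> ('v \<times> 'v) sset" where
  "signed_cut Ed S = ({(u, w)\<in>Ed. u \<in> S \<and> w \<notin> S}, {(u, w)\<in>Ed. w \<in> S \<and> u \<notin> S})"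

definition signed_min_cuts :: "'v set \<Rightarrow> ('v \<times> 'v) set \<Rightarrow> ('v \<times> 'v) sset set" where
  "signed_min_cuts V Ed = {signed_cut Ed S | S. S \<subseteq> V \<and> connected_on Ed S \<and> connected_on Ed (V - S)}"

definition strong_map :: "'v set \<Rightarrow> ('v \<times> 'v) set \<Rightarrow> (('v \<times> 'v) \<times> ('v \<times> 'v)) set \<Rightarrow> bool" where
  "strong_map V Ed lt \<longleftrightarrow> (\<forall>X\<in>signed_min_cuts V Ed. is_vector_tot lt X)"

definition star_cocircuit :: "('v \<times> 'v) set \<Rightarrow> 'v \<Rightarrow> ('v \<times> 'v) sset" where
  "star_cocircuit Ed v = ({(u, w)\<in>Ed. w = v}, {(u, w)\<in>Ed. u = v})"

definition twisted_graph ::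
  "'v set \<Rightarrow> ('v \<times> 'v) set \<Rightarrow> (('v \<times> 'v) \<times> ('v \<times> 'v)) set \<Rightarrow> ('v \<times> 'v) sset set \<Rightarrow> bool" where
  "twisted_graph V Ed pr A \<longleftrightarrow>
     digraph_wf V Ed \<and> strict_partial_order_on Ed pr \<and> three_edge_connected V Ed
     \<and> A \<subseteq> circuits_po Ed pr
     \<and> (\<forall>lt. strict_total_order_on Ed lt \<and> pr \<subseteq> lt \<longrightarrow> strong_map V Ed lt)
     \<and> (\<exists>Av. A = (\<Union>v\<in>V. Av v)
           \<and> (\<forall>v\<in>V. \<forall>w\<in>V. v \<noteq> w \<longrightarrow> Av v \<inter> Av w = {})
           \<and> (\<forall>v\<in>V. composes_to (Av v) (star_cocircuit Ed v)))"

text \<open>Positive sequence on F: enumerations a_1..a_m (list as, 0-indexed) of A and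
  f_2..f_m (list fs, with f_j = fs ! (j - 1) for 0-indexed j = 1..m-1) of F.\<close>
definition positive_sequence :: "'e sset set \<Rightarrow> 'e set \<Rightarrow> 'e sset list \<Rightarrow> 'e list \<Rightarrow> bool" where
  "positive_sequence A F as fs \<longleftrightarrow>
     distinct as \<and> set as = A \<and> distinct fs \<and> set fs = F \<and> length fs + 1 = length as
     \<and> (\<forall>j. 1 \<le> j \<and> j < length as \<longrightarrow>
          ssign (as ! j) (fs ! (j - 1)) \<noteq> 0
        \<and> (\<forall>i. j < i \<and> i < length as \<longrightarrow> ssign (as ! i) (fs ! (j - 1)) = 0)
        \<and> (\<forall>i < j. ssign (as ! i) (fs ! (j - 1)) \<in> {0, - ssign (as ! j) (fs ! (j - 1))}))"

end

theory Submission
  imports Defs "HOL-Library.Transitive_Closure_Table"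
begin

text \<open>In a cubic graph every vertex cocircuit \<open>C*_v\<close> has three elements, and so does every
  circuit of \<open>M(<)\<close>. The members of \<open>A_v\<close> compose to \<open>C*_v\<close>, so their supports lie in, hence
  equal, the support of \<open>C*_v\<close>; conformal signed sets with equal support coincide, so
  \<open>A_v = {C*_v}\<close>. Now list the vertices in the order in which a search of the spanning tree
  reaches them and let \<open>f_j\<close> be the tree edge by which \<open>v_j\<close> is reached. Its other end is an
  earlier vertex \<open>v_i\<close>, so \<open>C*_{v_j}\<close> and \<open>C*_{v_i}\<close> are the only members of \<open>A\<close> nonzero on
  \<open>f_j\<close>, with opposite signs. Every tree edge is some \<open>f_j\<close>, since an edge left out would close
  a cycle with the tree path between its ends.\<close>

definition supp :: "'e sset \<Rightarrow> 'e set" where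
  "supp X = fst X \<union> snd X"

lemma supp_scomp [simp]: "supp (scomp X Y) = supp X \<union> supp Y"
  by (auto simp: supp_def scomp_def)

lemma scomp_list_Cons [simp]: "scomp_list (Y # xs) = scomp Y (scomp_list xs)"
  by (simp add: scomp_list_def)

lemma supp_scomp_list: "supp (scomp_list xs) = (\<Union>Y\<in>set xs. supp Y)"
  by (induction xs) (auto simp: scomp_list_def supp_def scomp_def)

lemma scomp_absorb: "supp Z \<subseteq> supp Y \<Longrightarrow> scomp Y Z = Y"
  by (cases Y; cases Z) (auto simp: scomp_def supp_def)

lemma supp_subset_if_composes_to: "composes_to S X \<Longrightarrow> Y \<in> S \<Longrightarrow> supp Y \<subseteq> supp X"
  by (auto simp: composes_to_def supp_scomp_list)

lemma conformal_eq_if_supp_eq: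
  assumes "conformal Y Z" "supp Y = supp Z" "fst Y \<inter> snd Y = {}" "fst Z \<inter> snd Z = {}"
  shows "Y = Z"
proof -
  have "e \<notin> fst Y \<inter> snd Z" "e \<notin> snd Y \<inter> fst Z" for e
  proof -
    have clash: "\<not> (ssign Y e = - ssign Z e \<and> ssign Y e \<noteq> 0)"
      using assms(1) unfolding conformal_def by blast
    show "e \<notin> fst Y \<inter> snd Z"
    proof
      assume "e \<in> fst Y \<inter> snd Z"
      with assms(4) have "ssign Y e = 1" "ssign Z e = -1"
        unfolding ssign_def by auto
      with clash show False by simp
    qed
    show "e \<notin> snd Y \<inter> fst Z"
    proof
      assume "e \<in> snd Y \<inter> fst Z"
      with assms(3) have "ssign Y e = -1" "ssign Z e = 1"
        unfolding ssign_def by auto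
      with clash show False by simp
    qed
  qed
  with assms(2) have "fst Y = fst Z" "snd Y = snd Z"
    unfolding supp_def by blast+
  then show ?thesis by (simp add: prod_eq_iff)
qed

lemma composes_to_singleton:
  assumes comp: "composes_to S X" and finite: "finite (supp X)" and nonempty: "supp X \<noteq> {}"
    and atoms: "\<And>Y. Y \<in> S \<Longrightarrow> card (supp Y) = card (supp X) \<and> fst Y \<inter> snd Y = {}"
  shows "S = {X}"
proof -
  obtain xs where conf: "\<forall>Y\<in>S. \<forall>Z\<in>S. conformal Y Z" and xs: "set xs = S" "scomp_list xs = X"
    using comp unfolding composes_to_def by blast
  have supp_eq: "supp Y = supp X" if "Y \<in> S" for Y
  proof (rule card_subset_eq[OF finite])
    show "supp Y \<subseteq> supp X" using supp_subset_if_composes_to[OF comp that] .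
    show "card (supp Y) = card (supp X)" using atoms[OF that] by blast
  qed
  obtain Y0 rest where xs0: "xs = Y0 # rest"
  proof (cases xs)
    case Nil
    with xs(2) have "X = ({}, {})" by (simp add: scomp_list_def)
    with nonempty show ?thesis by (simp add: supp_def)
  next
    case (Cons Y rest)
    with that show ?thesis .
  qed
  have Y0: "Y0 \<in> S" using xs(1) xs0 by auto
  have "supp (scomp_list rest) \<subseteq> supp Y0"
    using supp_eq xs(1) xs0 Y0 by (auto simp: supp_scomp_list)
  then have "X = Y0"
    using xs(2) xs0 by (simp add: scomp_absorb)
  moreover have "Y = Y0" if "Y \<in> S" for Y
  proof (rule conformal_eq_if_supp_eq)
    show "conformal Y Y0" using conf that Y0 by blast
    show "supp Y = supp Y0" using supp_eq that Y0 by simp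
    show "fst Y \<inter> snd Y = {}" "fst Y0 \<inter> snd Y0 = {}" using atoms that Y0 by blast+
  qed
  ultimately show ?thesis using Y0 by blast
qed

lemma circuits_tot_card_supp:
  assumes "strict_total_order_on E lt" "Y \<in> circuits_tot lt"
  shows "card (supp Y) = 3 \<and> fst Y \<inter> snd Y = {}"
proof -
  have "irrefl lt" "trans lt"
    using assms(1) by (auto simp: strict_total_order_on_def strict_partial_order_on_def)
  from assms(2) obtain e1 e2 e3 where "(e1, e2) \<in> lt" "(e2, e3) \<in> lt"
    and Y: "Y = ({e1, e3}, {e2}) \<or> Y = ({e2}, {e1, e3})"
    unfolding circuits_tot_def by blast
  with \<open>irrefl lt\<close> \<open>trans lt\<close> have "e1 \<noteq> e2" "e2 \<noteq> e3" "e1 \<noteq> e3"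
    by (auto simp: irrefl_def dest: transD)
  with Y show ?thesis by (auto simp: supp_def)
qed

lemma card_supp_star_cocircuit:
  assumes "cubic V Ed" "v \<in> V"
  shows "card (supp (star_cocircuit Ed v)) = 3"
proof -
  have "supp (star_cocircuit Ed v) = {e \<in> Ed. fst e = v \<or> snd e = v}"
    by (auto simp: supp_def star_cocircuit_def)
  with assms show ?thesis by (simp add: cubic_def)
qed

lemma twisted_graph_cubic_atoms:
  assumes cubic: "cubic V Ed" and total: "strict_total_order_on Ed lt"
    and twisted: "twisted_graph V Ed lt A"
  shows "A = star_cocircuit Ed ` V" "inj_on (star_cocircuit Ed) V"
proof -
  have circuits: "A \<subseteq> circuits_po Ed lt"
    and "\<exists>Av. A = (\<Union>v\<in>V. Av v) \<and> (\<forall>v\<in>V. \<forall>w\<in>V. v \<noteq> w \<longrightarrow> Av v \<inter> Av w = {})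
           \<and> (\<forall>v\<in>V. composes_to (Av v) (star_cocircuit Ed v))"
    using twisted unfolding twisted_graph_def by (simp_all only:)
  then obtain Av where A: "A = (\<Union>v\<in>V. Av v)"
    and disj: "\<forall>v\<in>V. \<forall>w\<in>V. v \<noteq> w \<longrightarrow> Av v \<inter> Av w = {}"
    and comp: "\<forall>v\<in>V. composes_to (Av v) (star_cocircuit Ed v)"
    by blast
  have "circuits_po Ed lt \<subseteq> circuits_tot lt"
    unfolding circuits_po_def using total by blast
  with circuits have atom: "card (supp Y) = 3 \<and> fst Y \<inter> snd Y = {}" if "Y \<in> A" for Y
    using circuits_tot_card_supp[OF total] that by blast
  have Av: "Av v = {star_cocircuit Ed v}" if "v \<in> V" for v
  proof (rule composes_to_singleton)
    show "composes_to (Av v) (star_cocircuit Ed v)" using comp that by blast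
    have three: "card (supp (star_cocircuit Ed v)) = 3"
      using card_supp_star_cocircuit[OF cubic that] .
    then show "finite (supp (star_cocircuit Ed v))" "supp (star_cocircuit Ed v) \<noteq> {}"
      by (auto intro: card_ge_0_finite)
    show "card (supp Y) = card (supp (star_cocircuit Ed v)) \<and> fst Y \<inter> snd Y = {}"
      if "Y \<in> Av v" for Y
    proof -
      have "Y \<in> A" using A \<open>v \<in> V\<close> that by blast
      with atom three show ?thesis by simp
    qed
  qed
  then show "A = star_cocircuit Ed ` V"
    using A by auto
  show "inj_on (star_cocircuit Ed) V"
  proof (rule inj_onI, rule ccontr)
    fix v w assume "v \<in> V" "w \<in> V" "star_cocircuit Ed v = star_cocircuit Ed w" "v \<noteq> w"
    with disj Av show False by auto
  qed
qed

lemma has_cycle_if_edge_on_path: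
  assumes edge: "(a, b) \<in> D" "a \<noteq> b" "(b, a) \<notin> D"
    and path: "(a, b) \<in> (adj (D - {(a, b)}))\<^sup>*"
  shows "has_cycle D"
proof -
  let ?R = "\<lambda>u w. (u, w) \<in> adj (D - {(a, b)})"
  from path have "?R\<^sup>*\<^sup>* a b"
    by (simp add: rtranclp_rtrancl_eq)
  then obtain xs where "rtrancl_path ?R a xs b"
    by (auto simp: rtranclp_eq_rtrancl_path)
  then obtain ys where ys: "rtrancl_path ?R a ys b" "distinct (a # ys)"
    by (rule rtrancl_path_distinct)
  have "ys \<noteq> []"
    using ys(1) edge(2) by (auto elim: rtrancl_path.cases)
  moreover have "ys \<noteq> [b]"
  proof
    assume "ys = [b]"
    with ys(1) have "?R a b" by (auto elim: rtrancl_path.cases)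
    with edge(3) show False by (auto simp: adj_def)
  qed
  moreover have "last ys = b"
    using rtrancl_path_last[OF ys(1) \<open>ys \<noteq> []\<close>] .
  ultimately have len: "length (a # ys) \<ge> 3"
    by (cases ys rule: rev_cases) (auto simp: Suc_le_eq)
  have "(vs ! i, vs ! ((i + 1) mod length vs)) \<in> adj D" if "vs = a # ys" "i < length vs" for vs i
  proof (cases "i < length ys")
    case True
    then have "?R ((a # ys) ! i) (ys ! i)"
      using rtrancl_path_nth[OF ys(1)] by blast
    with True that show ?thesis by (auto simp: adj_def)
  next
    case False
    with that have "i = length ys" by simp
    with that have "vs ! i = b" "(i + 1) mod length vs = 0"
      using \<open>last ys = b\<close> \<open>ys \<noteq> []\<close> by (simp_all add: last_conv_nth)
    with that edge(1) show ?thesis by (auto simp: adj_def)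
  qed
  with len ys(2) show ?thesis
    unfolding has_cycle_def by blast
qed

inductive search_order :: "('v \<times> 'v) set \<Rightarrow> 'v list \<Rightarrow> ('v \<times> 'v) list \<Rightarrow> bool"
  for F :: "('v \<times> 'v) set" where
  start: "search_order F [r] []"
| reach: "search_order F vs fs \<Longrightarrow> a \<in> set vs \<Longrightarrow> b \<notin> set vs \<Longrightarrow> e \<in> F
    \<Longrightarrow> e = (a, b) \<or> e = (b, a) \<Longrightarrow> search_order F (vs @ [b]) (fs @ [e])"

lemma search_order_basics:
  "search_order F vs fs \<Longrightarrow> distinct vs \<and> length vs = Suc (length fs) \<and> set fs \<subseteq> F"
  by (induction rule: search_order.induct) auto

lemma search_order_edge_ends:
  "search_order F vs fs \<Longrightarrow> (x, y) \<in> set fs \<Longrightarrow> x \<in> set vs \<and> y \<in> set vs"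
  by (induction rule: search_order.induct) auto

lemma search_order_distinct_edges: "search_order F vs fs \<Longrightarrow> distinct fs"
  by (induction rule: search_order.induct) (auto dest: search_order_edge_ends)

lemma search_order_nth_edge:
  assumes "search_order F vs fs" "k < length fs"
  shows "\<exists>i\<le>k. fs ! k = (vs ! i, vs ! Suc k) \<or> fs ! k = (vs ! Suc k, vs ! i)"
  using assms
proof (induction rule: search_order.induct)
  case (reach vs fs a b e)
  have len: "length vs = Suc (length fs)"
    using search_order_basics[OF reach.hyps(1)] by simp
  show ?case
  proof (cases "k < length fs")
    case True
    then obtain i where "i \<le> k" "fs ! k = (vs ! i, vs ! Suc k) \<or> fs ! k = (vs ! Suc k, vs ! i)"
      using reach.IH by blast
    moreover have "(fs @ [e]) ! k = fs ! k" "(vs @ [b]) ! Suc k = vs ! Suc k"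
      "(vs @ [b]) ! i = vs ! i" if "i \<le> k"
      using True len that by (simp_all add: nth_append)
    ultimately show ?thesis by metis
  next
    case False
    with reach.prems have k: "k = length fs" by simp
    obtain i where i: "i < length vs" "vs ! i = a"
      using \<open>a \<in> set vs\<close> by (auto simp: in_set_conv_nth)
    have "(fs @ [e]) ! k = e" "(vs @ [b]) ! Suc k = b" "(vs @ [b]) ! i = a" "i \<le> k"
      using k len i by (simp_all add: nth_append)
    with reach.hyps(5) show ?thesis by metis
  qed
qed simp

lemma sym_rtrancl_adj: "sym ((adj D)\<^sup>*)"
  by (rule sym_rtrancl) (auto simp: adj_def sym_def)

lemma search_order_connected:
  assumes "search_order F vs fs" "x \<in> set vs" "y \<in> set vs"
  shows "(x, y) \<in> (adj (set fs))\<^sup>*"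
  using assms
proof (induction arbitrary: x y rule: search_order.induct)
  case (reach vs fs a b e)
  let ?R = "(adj (set (fs @ [e])))\<^sup>*"
  have mono: "(adj (set fs))\<^sup>* \<subseteq> ?R"
    by (rule rtrancl_mono) (auto simp: adj_def)
  have "(a, b) \<in> adj (set (fs @ [e]))"
    using reach.hyps(5) by (auto simp: adj_def)
  then have to_b: "(z, b) \<in> ?R" if "z \<in> set vs" for z
    using reach.IH[OF that \<open>a \<in> set vs\<close>] mono by (meson rtrancl.rtrancl_into_rtrancl subsetD)
  have from_b: "(b, z) \<in> ?R" if "z \<in> set vs" for z
    using symD[OF sym_rtrancl_adj to_b[OF that]] .
  show ?case
  proof (cases "x = b"; cases "y = b")
    assume "x \<noteq> b" "y \<noteq> b"
    with reach.prems have "x \<in> set vs" "y \<in> set vs" by simp_all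
    then show ?thesis using reach.IH mono by blast
  qed (use reach.prems to_b from_b in simp_all)
qed simp

lemma rtrancl_exit:
  "(x, y) \<in> R\<^sup>* \<Longrightarrow> x \<in> P \<Longrightarrow> y \<notin> P \<Longrightarrow> \<exists>a b. (a, b) \<in> R \<and> a \<in> P \<and> b \<notin> P"
  by (induction rule: rtrancl_induct) auto

lemma search_order_extend:
  assumes "search_order F vs fs" "set vs \<subset> V" "connected_on F V"
  obtains b e where "b \<in> V - set vs" "search_order F (vs @ [b]) (fs @ [e])"
proof -
  obtain x where x: "x \<in> set vs"
    using assms(1) by cases auto
  obtain y where y: "y \<in> V" "y \<notin> set vs"
    using assms(2) by blast
  have "(x, y) \<in> (adj F \<inter> V \<times> V)\<^sup>*"
    using assms(2,3) x y(1) unfolding connected_on_def by blast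
  from rtrancl_exit[OF this x y(2)] obtain a b
    where ab: "(a, b) \<in> adj F \<inter> V \<times> V" "a \<in> set vs" "b \<notin> set vs"
    by blast
  then obtain e where e: "e \<in> F" "e = (a, b) \<or> e = (b, a)"
    unfolding adj_def by blast
  show ?thesis
  proof (rule that)
    show "b \<in> V - set vs" using ab by blast
    show "search_order F (vs @ [b]) (fs @ [e])"
      by (rule search_order.reach[OF assms(1) ab(2,3) e])
  qed
qed

lemma search_order_exists:
  assumes "finite V" "connected_on F V"
  obtains vs fs where "search_order F vs fs" "set vs = V"
proof -
  have "\<exists>vs' fs'. search_order F vs' fs' \<and> set vs' = V"
    if "search_order F vs fs" "set vs \<subseteq> V" for vs fs
    using that
  proof (induction "card (V - set vs)" arbitrary: vs fs rule: less_induct)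
    case less
    show ?case
    proof (cases "set vs = V")
      case False
      with less.prems obtain b e
        where b: "b \<in> V - set vs" and reached: "search_order F (vs @ [b]) (fs @ [e])"
        using search_order_extend[OF _ _ assms(2)] by blast
      have "card ((V - set vs) - {b}) < card (V - set vs)"
        using b \<open>finite V\<close> by (intro card_Diff1_less) auto
      moreover have "V - set (vs @ [b]) = (V - set vs) - {b}" by auto
      ultimately have "card (V - set (vs @ [b])) < card (V - set vs)" by simp
      moreover have "set (vs @ [b]) \<subseteq> V" using b less.prems(2) by auto
      ultimately show ?thesis using less.hyps reached by blast
    qed (use less.prems in blast)
  qed
  moreover obtain r where "r \<in> V"
    using assms(2) by (auto simp: connected_on_def)
  ultimately show ?thesis
    using that search_order.start[of F r] by (metis empty_subsetI insert_subset list.set(1,2))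
qed

lemma search_order_edges_eq_tree:
  assumes order: "search_order F vs fs" and "F \<subseteq> set vs \<times> set vs" "\<not> has_cycle F"
    and simple: "\<forall>(u, w)\<in>F. u \<noteq> w \<and> (w, u) \<notin> F"
  shows "set fs = F"
proof
  show "set fs \<subseteq> F" using search_order_basics[OF order] by blast
  show "F \<subseteq> set fs"
  proof
    fix e assume "e \<in> F"
    then obtain u w where e: "e = (u, w)" "u \<in> set vs" "w \<in> set vs"
      using \<open>F \<subseteq> set vs \<times> set vs\<close> by blast
    show "e \<in> set fs"
    proof (rule ccontr)
      assume "e \<notin> set fs"
      then have "adj (set fs) \<subseteq> adj (F - {(u, w)})"
        using \<open>set fs \<subseteq> F\<close> e(1) by (auto simp: adj_def)
      then have "(u, w) \<in> (adj (F - {(u, w)}))\<^sup>*"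
        using search_order_connected[OF order e(2,3)] rtrancl_mono by blast
      with \<open>e \<in> F\<close> e(1) simple have "has_cycle F"
        by (intro has_cycle_if_edge_on_path) auto
      with \<open>\<not> has_cycle F\<close> show False ..
    qed
  qed
qed

lemma ssign_star_cocircuit_ends:
  assumes "e \<in> Ed" "e = (x, y) \<or> e = (y, x)" "x \<noteq> y"
  shows "ssign (star_cocircuit Ed y) e \<noteq> 0"
    and "ssign (star_cocircuit Ed x) e = - ssign (star_cocircuit Ed y) e"
    and "v \<noteq> x \<Longrightarrow> v \<noteq> y \<Longrightarrow> ssign (star_cocircuit Ed v) e = 0"
  using assms by (auto simp: ssign_def star_cocircuit_def)

lemma search_order_positive_sequence:
  assumes order: "search_order F vs fs" and "F \<subseteq> Ed"
    and inj: "inj_on (star_cocircuit Ed) (set vs)"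
  shows "positive_sequence (star_cocircuit Ed ` set vs) (set fs) (map (star_cocircuit Ed) vs) fs"
proof -
  let ?a = "\<lambda>l. star_cocircuit Ed (vs ! l)"
  have vs: "distinct vs" "length vs = Suc (length fs)" "set fs \<subseteq> F"
    using search_order_basics[OF order] by auto
  have "ssign (?a j) (fs ! (j - 1)) \<noteq> 0
      \<and> (\<forall>l. j < l \<and> l < length vs \<longrightarrow> ssign (?a l) (fs ! (j - 1)) = 0)
      \<and> (\<forall>l<j. ssign (?a l) (fs ! (j - 1)) \<in> {0, - ssign (?a j) (fs ! (j - 1))})"
    if j: "1 \<le> j" "j < length vs" for j
  proof -
    have "j - 1 < length fs" "Suc (j - 1) = j"
      using j vs(2) by auto
    then obtain i where i: "i < j" "fs ! (j - 1) = (vs ! i, vs ! j) \<or> fs ! (j - 1) = (vs ! j, vs ! i)"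
      using search_order_nth_edge[OF order] by (metis le_imp_less_Suc)
    have "fs ! (j - 1) \<in> Ed"
      using nth_mem[OF \<open>j - 1 < length fs\<close>] vs(3) \<open>F \<subseteq> Ed\<close> by blast
    moreover have "vs ! l = vs ! m \<longleftrightarrow> l = m" if "l < length vs" "m < length vs" for l m
      using vs(1) that by (simp add: nth_eq_iff_index_eq)
    ultimately have ends: "ssign (?a j) (fs ! (j - 1)) \<noteq> 0"
      "ssign (?a i) (fs ! (j - 1)) = - ssign (?a j) (fs ! (j - 1))"
      "l < length vs \<Longrightarrow> l \<noteq> i \<Longrightarrow> l \<noteq> j \<Longrightarrow> ssign (?a l) (fs ! (j - 1)) = 0" for l
      using ssign_star_cocircuit_ends[of "fs ! (j - 1)" Ed "vs ! i" "vs ! j"] i j by auto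
    moreover have "ssign (?a l) (fs ! (j - 1)) \<in> {0, - ssign (?a j) (fs ! (j - 1))}" if "l < j" for l
      using ends(2,3) that j by (cases "l = i") auto
    ultimately show ?thesis
      using i j by auto
  qed
  moreover have "distinct (map (star_cocircuit Ed) vs)"
    using vs(1) inj by (simp add: distinct_map)
  ultimately show ?thesis
    unfolding positive_sequence_def
    using vs search_order_distinct_edges[OF order] by auto
qed

theorem mainTheorem16:
  fixes V :: "'v set" and Ed :: "('v \<times> 'v) set" and F :: "('v \<times> 'v) set"
    and lt :: "(('v \<times> 'v) \<times> ('v \<times> 'v)) set" and A :: "('v \<times> 'v) sset set"
  assumes "digraph_wf V Ed"
    and "cubic V Ed"
    and "spanning_tree V Ed F"
    and "strict_total_order_on Ed lt"
    and "twisted_graph V Ed lt A"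
  shows "\<exists>as fs. positive_sequence A F as fs"
proof -
  have "finite V" "Ed \<subseteq> V \<times> V" and simple: "\<forall>(u, w)\<in>Ed. u \<noteq> w \<and> (w, u) \<notin> Ed"
    using assms(1) by (auto simp: digraph_wf_def)
  have "F \<subseteq> Ed" "connected_on F V" "\<not> has_cycle F"
    using assms(3) by (auto simp: spanning_tree_def)
  obtain vs fs where order: "search_order F vs fs" "set vs = V"
    using search_order_exists[OF \<open>finite V\<close> \<open>connected_on F V\<close>] .
  have "F \<subseteq> set vs \<times> set vs"
    using \<open>F \<subseteq> Ed\<close> \<open>Ed \<subseteq> V \<times> V\<close> order(2) by simp
  moreover have "\<forall>(u, w)\<in>F. u \<noteq> w \<and> (w, u) \<notin> F"
    using simple \<open>F \<subseteq> Ed\<close> by blast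
  ultimately have "set fs = F"
    using search_order_edges_eq_tree[OF order(1)] \<open>\<not> has_cycle F\<close> by simp
  have "A = star_cocircuit Ed ` set vs" "inj_on (star_cocircuit Ed) (set vs)"
    using twisted_graph_cubic_atoms[OF assms(2,4,5)] order(2) by simp_all
  then have "positive_sequence A F (map (star_cocircuit Ed) vs) fs"
    using search_order_positive_sequence[OF order(1) \<open>F \<subseteq> Ed\<close>] \<open>set fs = F\<close> by simp
  then show ?thesis by blast
qed

end
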